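(* Let $A=\mathbb{Q}[X]$, $K=\mathbb{Q}(X)$, $B=A[T,Y,Z]=A^{[3]}$, and let $D\in\operatorname{LND}_A(B)$ be defined by $D(T)=0$, $D(Y)=X$, $D(Z)=Y$. Then $\operatorname{rank} D=2$, $\operatorname{rank} D_K=1$, and $D$ is not rigid: both $(T,Y,Z)$ and $(T',Y,Z)$ with $T'=T-Y^2+2XZ$ lie in $\Gamma_D(B)$, but $A[T]\neq A[T']$.
   Context: $D_K$ is the extension of $D$ to $K^{[3]}=K[T,Y,Z]$. If $B=A^{[n]}$, a coordinate system of $B$ over $A$ is an ordered $n$-tuple $(X_1,\dots,X_n)$ of elements of $B$ with $A[X_1,\dots,X_n]=B$; $\Gamma(B)$ denotes the set of all such. $\operatorname{LND}_A(B)$ is the set of locally nilpotent $A$-derivations of $B$. The rank of $D$ is the least integer $r\ge 0$ such that there is a coordinate system $(X_1,\dots,X_n)$ of $B$ over $A$ with $A[X_1,\dots,X_{n-r}]\subset\ker D$. For $D$ of rank $r$, $\Gamma_D(B)$ is the set of $(X_1,\dots,X_n)\in\Gamma(B)$ with $A[X_1,\dots,X_{n-r}]\subset \ker D$. $D$ is rigid if $A[X_1,\dots,X_{n-r}]=A[X_1',\dots,X_{n-r}']$ whenever $(X_1,\dots,X_n)$ and $(X_1',\dots,X_n')$ both belong to $\Gamma_D(B)$. *)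

theory Defs
  imports "HOL-Computational_Algebra.Polynomial" "HOL-Computational_Algebra.Fraction_Field"
begin

text \<open>A polynomial ring R[T,Y,Z] over a commutative ring R is modelled as the nested
 polynomial type R poly poly poly: T is the innermost variable, Y the middle, Z the outermost.\<close>

definition cst3 :: "'a::comm_ring_1 \<Rightarrow> 'a poly poly poly" where
  "cst3 c = [:[:[:c:]:]:]"

definition varT :: "'a::comm_ring_1 poly poly poly" where
  "varT = [:[:[:0, 1:]:]:]"

definition varY :: "'a::comm_ring_1 poly poly poly" where
  "varY = [:[:0, 1:]:]"

definition varZ :: "'a::comm_ring_1 poly poly poly" where
  "varZ = [:0, 1:]"

inductive_set alg_gen :: "('a \<Rightarrow> 'b::comm_ring_1) \<Rightarrow> 'b set \<Rightarrow> 'b set"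
  for emb :: "'a \<Rightarrow> 'b" and S :: "'b set" where
  base: "a \<in> range emb \<Longrightarrow> a \<in> alg_gen emb S"
| gen: "s \<in> S \<Longrightarrow> s \<in> alg_gen emb S"
| add: "x \<in> alg_gen emb S \<Longrightarrow> y \<in> alg_gen emb S \<Longrightarrow> x + y \<in> alg_gen emb S"
| mult: "x \<in> alg_gen emb S \<Longrightarrow> y \<in> alg_gen emb S \<Longrightarrow> x * y \<in> alg_gen emb S"

definition coord_sys :: "('a \<Rightarrow> 'b::comm_ring_1) \<Rightarrow> nat \<Rightarrow> 'b list \<Rightarrow> bool" where
  "coord_sys emb n xs \<longleftrightarrow> length xs = n \<and> alg_gen emb (set xs) = UNIV"

definition ker :: "('b \<Rightarrow> 'b::zero) \<Rightarrow> 'b set" where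
  "ker D = {b. D b = 0}"

definition der_rank :: "('a \<Rightarrow> 'b::comm_ring_1) \<Rightarrow> nat \<Rightarrow> ('b \<Rightarrow> 'b) \<Rightarrow> nat" where
  "der_rank emb n D = (LEAST r. \<exists>xs. coord_sys emb n xs \<and> set (take (n - r) xs) \<subseteq> ker D)"

definition Gamma_D :: "('a \<Rightarrow> 'b::comm_ring_1) \<Rightarrow> nat \<Rightarrow> ('b \<Rightarrow> 'b) \<Rightarrow> 'b list set" where
  "Gamma_D emb n D = {xs. coord_sys emb n xs \<and> set (take (n - der_rank emb n D) xs) \<subseteq> ker D}"

definition rigid :: "('a \<Rightarrow> 'b::comm_ring_1) \<Rightarrow> nat \<Rightarrow> ('b \<Rightarrow> 'b) \<Rightarrow> bool" where
  "rigid emb n D \<longleftrightarrow> (\<forall>xs \<in> Gamma_D emb n D. \<forall>ys \<in> Gamma_D emb n D.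
     alg_gen emb (set (take (n - der_rank emb n D) xs)) =
     alg_gen emb (set (take (n - der_rank emb n D) ys)))"

definition dY :: "'a::idom poly poly poly \<Rightarrow> 'a poly poly poly" where
  "dY f = map_poly pderiv f"

definition dZ :: "'a::idom poly poly poly \<Rightarrow> 'a poly poly poly" where
  "dZ f = pderiv f"

definition Dx :: "'a::idom \<Rightarrow> 'a poly poly poly \<Rightarrow> 'a poly poly poly" where
  "Dx x f = cst3 x * dY f + varY * dZ f"

text \<open>A = Q[X], with X = [:0,1:]; K = Q(X) = fraction field of A.\<close>
type_synonym ringA = "rat poly"
type_synonym ringB = "rat poly poly poly poly"
type_synonym ringBK = "rat poly fract poly poly poly"

definition D_A :: "ringB \<Rightarrow> ringB" where
  "D_A = Dx [:0, 1:]"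

definition D_K :: "ringBK \<Rightarrow> ringBK" where
  "D_K = Dx (Fract [:0, 1:] 1)"

end

theory Submission
  imports Defs
begin

text \<open>A derivation vanishing on all but one coordinate c of a coordinate system maps every
  element into the principal ideal generated by D c. For D = X\<partial>/\<partial>Y + Y\<partial>/\<partial>Z over A = \<rat>[X]
  this would make D c a common divisor of D Y = X and D Z = Y, hence a unit, while D c always
  lies in the ideal (X, Y); so at most one coordinate is in the kernel and rank D = 2.
  Over K = \<rat>(X) the element Z - Y^2/(2X) is a kernel coordinate besides T, so rank D_K = 1.
  Finally T and T' = T - Y^2 + 2XZ both complete Y, Z to a coordinate system with kernel
  element in front, yet T' involves Z and thus is not in A[T].\<close>

subsection \<open>The derivation\<close>

lemma cst3_hom:
  "cst3 0 = 0" "cst3 1 = 1" "cst3 (a + b) = cst3 a + cst3 b" "cst3 (a * b) = cst3 a * cst3 b"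
  "cst3 (- a) = - cst3 a" "cst3 (numeral n) = numeral n"
  by (simp_all add: cst3_def one_pCons numeral_poly)

lemma cst3_eq_0_iff [simp]: "cst3 a = 0 \<longleftrightarrow> a = 0"
  by (simp add: cst3_def)

lemma pderiv_sum: "pderiv (sum f A) = (\<Sum>i\<in>A. pderiv (f i))"
  using higher_pderiv_sum[of 1 f A] by simp

lemma dY_add: "dY (f + g) = dY f + dY g"
  unfolding dY_def by (rule poly_eqI) (simp add: coeff_map_poly pderiv_add)

lemma dY_mult: "dY (f * g) = f * dY g + dY f * g"
  unfolding dY_def
proof (rule poly_eqI)
  fix n
  show "coeff (map_poly pderiv (f * g)) n = coeff (f * map_poly pderiv g + map_poly pderiv f * g) n"
    unfolding coeff_add coeff_map_poly[of pderiv, OF pderiv_0] coeff_mult pderiv_sum pderiv_mult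
      sum.distrib
    by (simp add: mult.commute)
qed

lemma dY_diff: "dY (f - g) = dY f - dY g"
  unfolding dY_def by (rule poly_eqI) (simp add: coeff_map_poly pderiv_diff)

lemma Dx_add: "Dx x (f + g) = Dx x f + Dx x g"
  unfolding Dx_def dZ_def by (simp add: dY_add pderiv_add algebra_simps)

lemma Dx_mult: "Dx x (f * g) = f * Dx x g + g * Dx x f"
  unfolding Dx_def dZ_def by (simp add: dY_mult pderiv_mult algebra_simps)

lemma Dx_diff: "Dx x (f - g) = Dx x f - Dx x g"
  unfolding Dx_def dZ_def by (simp add: dY_diff pderiv_diff algebra_simps)

lemma Dx_cst3 [simp]: "Dx x (cst3 c) = 0"
  by (simp add: Dx_def dY_def dZ_def cst3_def map_poly_pCons)

lemma Dx_numeral [simp]: "Dx x (numeral n) = 0"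
  using Dx_cst3[of x "numeral n"] by (simp add: cst3_hom)

lemma Dx_varT [simp]: "Dx x varT = 0"
  by (simp add: Dx_def dY_def dZ_def varT_def map_poly_pCons)

lemma Dx_varY [simp]: "Dx x varY = cst3 x"
  by (simp add: Dx_def dY_def dZ_def varY_def pderiv_pCons map_poly_pCons flip: one_pCons)

lemma Dx_varZ [simp]: "Dx x varZ = varY"
  by (simp add: Dx_def dY_def dZ_def varZ_def pderiv_pCons map_poly_pCons)

subsection \<open>Generated subalgebras\<close>

lemma alg_gen_subset:
  assumes "S \<subseteq> alg_gen emb T" shows "alg_gen emb S \<subseteq> alg_gen emb T"
proof
  fix b assume "b \<in> alg_gen emb S" then show "b \<in> alg_gen emb T"
    by induct (use assms in \<open>auto intro: alg_gen.intros\<close>)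
qed

lemma alg_gen_cst3_diff:
  assumes "a \<in> alg_gen cst3 S" "b \<in> alg_gen cst3 S"
  shows "a - b \<in> alg_gen cst3 S"
proof -
  have "cst3 (-1) \<in> alg_gen cst3 S" by (rule alg_gen.base) simp
  then have "a + cst3 (-1) * b \<in> alg_gen cst3 S" using assms by (auto intro: alg_gen.intros)
  then show ?thesis by (simp add: cst3_hom)
qed

lemma alg_gen_varT_varY_varZ: "alg_gen cst3 {varT, varY, varZ} = UNIV"
proof -
  let ?S = "alg_gen cst3 {varT, varY, varZ}"
  have gens: "varT \<in> ?S" "varY \<in> ?S" "varZ \<in> ?S" by (auto intro: alg_gen.gen)
  have cst: "cst3 a \<in> ?S" for a by (rule alg_gen.base) simp
  have in_T: "[:[:t:]:] \<in> ?S" for t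
  proof (induct t)
    case 0 show ?case using cst[of 0] by (simp add: cst3_hom)
  next
    case (pCons a t)
    have "cst3 a + varT * [:[:t:]:] \<in> ?S" by (intro alg_gen.add alg_gen.mult cst gens pCons)
    moreover have "cst3 a + varT * [:[:t:]:] = [:[:pCons a t:]:]" by (simp add: cst3_def varT_def)
    ultimately show ?case by simp
  qed
  have in_TY: "[:y:] \<in> ?S" for y
  proof (induct y)
    case 0 show ?case using in_T[of 0] by simp
  next
    case (pCons a y)
    have "[:[:a:]:] + varY * [:y:] \<in> ?S" by (intro alg_gen.add alg_gen.mult in_T gens pCons)
    then show ?case by (simp add: varY_def)
  qed
  have "z \<in> ?S" for z
  proof (induct z)
    case 0 show ?case using in_TY[of 0] by simp
  next
    case (pCons a z)
    have "[:a:] + varZ * z \<in> ?S" by (intro alg_gen.add alg_gen.mult in_TY gens pCons)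
    then show ?case by (simp add: varZ_def)
  qed
  then show ?thesis by auto
qed

lemma alg_gen_eq_UNIV_if_varT_varY_varZ:
  assumes "{varT, varY, varZ} \<subseteq> alg_gen cst3 S"
  shows "alg_gen cst3 S = UNIV"
  using alg_gen_subset[OF assms] alg_gen_varT_varY_varZ by auto

lemma degree_alg_gen_varT:
  "b \<in> alg_gen cst3 {varT} \<Longrightarrow> degree b = 0"
proof (induct rule: alg_gen.induct)
  case (base a) then show ?case by (auto simp: cst3_def)
next
  case (gen s) then show ?case by (simp add: varT_def)
next
  case (add x y) then show ?case by (metis degree_add_le le_zero_eq)
next
  case (mult x y) then show ?case by (metis degree_mult_le le_zero_eq add_0)
qed

lemma alg_gen_varT_Y_Z_triangular:
  "alg_gen cst3 {varT - varY ^ 2 + 2 * cst3 x * varZ, varY, varZ} = UNIV"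
proof (rule alg_gen_eq_UNIV_if_varT_varY_varZ)
  let ?S = "alg_gen cst3 {varT - varY ^ 2 + 2 * cst3 x * varZ, varY, varZ}"
  have gens: "varT - varY ^ 2 + 2 * cst3 x * varZ \<in> ?S" "varY \<in> ?S" "varZ \<in> ?S"
    by (auto intro: alg_gen.gen)
  have "cst3 (2 * x) \<in> ?S" by (rule alg_gen.base) simp
  then have "(varT - varY ^ 2 + 2 * cst3 x * varZ) - (cst3 (2 * x) * varZ - varY * varY) \<in> ?S"
    by (intro alg_gen_cst3_diff alg_gen.mult gens)
  then have "varT \<in> ?S" by (simp add: cst3_hom power2_eq_square)
  with gens show "{varT, varY, varZ} \<subseteq> ?S" by auto
qed

lemma alg_gen_varT_Z_triangular_Y:
  "alg_gen cst3 {varT, varZ - cst3 c * varY ^ 2, varY} = UNIV"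
proof (rule alg_gen_eq_UNIV_if_varT_varY_varZ)
  let ?S = "alg_gen cst3 {varT, varZ - cst3 c * varY ^ 2, varY}"
  have gens: "varT \<in> ?S" "varZ - cst3 c * varY ^ 2 \<in> ?S" "varY \<in> ?S"
    by (auto intro: alg_gen.gen)
  have "cst3 c \<in> ?S" by (rule alg_gen.base) simp
  then have "(varZ - cst3 c * varY ^ 2) + cst3 c * (varY * varY) \<in> ?S"
    by (intro alg_gen.add alg_gen.mult gens)
  then have "varZ \<in> ?S" by (simp add: power2_eq_square)
  with gens show "{varT, varY, varZ} \<subseteq> ?S" by auto
qed

lemma coord_sys_3E:
  assumes "coord_sys emb 3 xs"
  obtains a b c where "xs = [a, b, c]" "alg_gen emb {a, b, c} = UNIV"
  using assms by (auto simp: coord_sys_def numeral_3_eq_3 length_Suc_conv)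

subsection \<open>Kernel and rank\<close>

lemma Dx_vanishes_on_alg_gen:
  assumes "\<forall>s\<in>S. Dx x s = 0" "b \<in> alg_gen cst3 S"
  shows "Dx x b = 0"
  using assms(2) by induct (use assms(1) in \<open>auto simp: Dx_add Dx_mult\<close>)

lemma Dx_dvd_on_alg_gen:
  assumes "\<forall>s\<in>S. Dx x s = 0" "b \<in> alg_gen cst3 (insert c S)"
  shows "Dx x c dvd Dx x b"
  using assms(2) by induct (use assms(1) in \<open>auto simp: Dx_add Dx_mult\<close>)

lemma dvd_const_poly_imp_const:
  fixes p :: "'a::idom poly"
  assumes "p dvd [:c:]" "c \<noteq> 0"
  shows "p = [:coeff p 0:]"
  using dvd_imp_degree_le[OF assms(1)] assms(2) by (simp add: degree_0_id)

lemma dvd_cst3_imp_cst3: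
  fixes h :: "'a::idom poly poly poly"
  assumes "h dvd cst3 c" "c \<noteq> 0"
  shows "h = cst3 (coeff (coeff (coeff h 0) 0) 0)"
proof -
  have h: "h = [:coeff h 0:]"
    using assms by (intro dvd_const_poly_imp_const[of _ "[:[:c:]:]"]) (simp_all add: cst3_def)
  with assms(1) have "coeff h 0 dvd [:[:c:]:]" by (metis cst3_def const_poly_dvd_const_poly_iff)
  moreover from this have h1: "coeff h 0 = [:coeff (coeff h 0) 0:]"
    using assms(2) by (intro dvd_const_poly_imp_const[of _ "[:c:]"]) simp_all
  ultimately have "coeff (coeff h 0) 0 dvd [:c:]" by (metis const_poly_dvd_const_poly_iff)
  then have "coeff (coeff h 0) 0 = [:coeff (coeff (coeff h 0) 0) 0:]"
    using assms(2) by (intro dvd_const_poly_imp_const) simp_all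
  with h h1 show ?thesis by (simp add: cst3_def)
qed

lemma cst3_dvd_varY_imp_unit: "cst3 a dvd varY \<Longrightarrow> a dvd 1"
proof (elim dvdE)
  fix v assume "varY = cst3 a * v"
  then have "coeff (coeff (coeff varY 0) 1) 0 = coeff (coeff (coeff (cst3 a * v) 0) 1) 0" by simp
  then have "1 = a * coeff (coeff (coeff v 0) 1) 0" by (simp add: cst3_def varY_def)
  then show "a dvd 1" by (metis dvd_triv_left)
qed

lemma dvd_const_coeff_Dx: "x dvd coeff (coeff (coeff (Dx x f) 0) 0) 0"
  by (simp add: Dx_def cst3_def varY_def)

lemma Dx_kernel_pair_imp_unit:
  fixes x :: "'a::idom"
  assumes "x \<noteq> 0" "alg_gen cst3 {a, b, c} = UNIV" "Dx x a = 0" "Dx x b = 0"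
  shows "x dvd 1"
proof -
  have dvd: "Dx x c dvd Dx x f" for f
    using Dx_dvd_on_alg_gen[of "{a, b}" x f c] assms(2-4) by (simp add: insert_commute)
  define h0 where "h0 = coeff (coeff (coeff (Dx x c) 0) 0) 0"
  have h: "Dx x c = cst3 h0"
    unfolding h0_def using dvd[of varY] assms(1) by (intro dvd_cst3_imp_cst3) simp_all
  have "h0 dvd 1" using dvd[of varZ] by (intro cst3_dvd_varY_imp_unit) (simp add: h)
  moreover have "x dvd h0" unfolding h0_def by (rule dvd_const_coeff_Dx)
  ultimately show ?thesis by (rule dvd_trans[rotated])
qed

lemma der_rank_eqI:
  assumes "r \<le> n" "coord_sys emb n xs" "set (take (n - r) xs) \<subseteq> ker D"
    and "\<And>ys. coord_sys emb n ys \<Longrightarrow> \<not> set (take (Suc (n - r)) ys) \<subseteq> ker D"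
  shows "der_rank emb n D = r"
  unfolding der_rank_def
proof (rule Least_equality)
  show "\<exists>xs. coord_sys emb n xs \<and> set (take (n - r) xs) \<subseteq> ker D" using assms(2,3) by blast
next
  fix r' assume "\<exists>ys. coord_sys emb n ys \<and> set (take (n - r') ys) \<subseteq> ker D"
  then obtain ys where ys: "coord_sys emb n ys" "set (take (n - r') ys) \<subseteq> ker D" by blast
  show "r \<le> r'"
  proof (rule ccontr)
    assume "\<not> r \<le> r'"
    with assms(1) have "set (take (Suc (n - r)) ys) \<subseteq> set (take (n - r') ys)"
      by (intro set_take_subset_set_take) simp
    with ys assms(4) show False by blast
  qed
qed

lemma der_rank_Dx_non_unit:
  fixes x :: "'a::idom"
  assumes "x \<noteq> 0" "\<not> x dvd 1"
  shows "der_rank cst3 3 (Dx x) = 2"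
proof (rule der_rank_eqI)
  show "coord_sys cst3 3 [varT, varY, varZ]" by (simp add: coord_sys_def alg_gen_varT_varY_varZ)
  show "set (take (3 - 2) [varT, varY, varZ]) \<subseteq> ker (Dx x)" by (simp add: ker_def)
next
  fix ys :: "'a poly poly poly list" assume "coord_sys cst3 3 ys"
  then obtain a b c where "ys = [a, b, c]" "alg_gen cst3 {a, b, c} = UNIV" by (rule coord_sys_3E)
  then show "\<not> set (take (Suc (3 - 2)) ys) \<subseteq> ker (Dx x)"
    using Dx_kernel_pair_imp_unit[of x a b c] assms by (auto simp: ker_def numeral_2_eq_2)
qed simp

lemma Dx_varY_square: "Dx x (varY ^ 2) = cst3 (2 * x) * varY"
  by (simp add: power2_eq_square Dx_mult cst3_hom algebra_simps)

lemma Dx_kernel_Z_coordinate: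
  fixes x :: "'a::field"
  assumes "2 * x \<noteq> 0"
  shows "Dx x (varZ - cst3 (inverse (2 * x)) * varY ^ 2) = 0"
proof -
  have "cst3 (inverse (2 * x)) * cst3 (2 * x) = 1"
    using assms by (simp add: cst3_hom(2) flip: cst3_hom(4))
  then show ?thesis by (simp add: Dx_diff Dx_mult Dx_varY_square mult.assoc[symmetric])
qed

lemma der_rank_Dx_field:
  fixes x :: "'a::field"
  assumes "2 * x \<noteq> 0"
  shows "der_rank cst3 3 (Dx x) = 1"
proof (rule der_rank_eqI)
  let ?xs = "[varT, varZ - cst3 (inverse (2 * x)) * varY ^ 2, varY]"
  show "coord_sys cst3 3 ?xs" by (simp add: coord_sys_def alg_gen_varT_Z_triangular_Y)
  show "set (take (3 - 1) ?xs) \<subseteq> ker (Dx x)"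
    using Dx_kernel_Z_coordinate[OF assms] by (simp add: ker_def numeral_2_eq_2)
next
  fix ys :: "'a poly poly poly list" assume ys: "coord_sys cst3 3 ys"
  show "\<not> set (take (Suc (3 - 1)) ys) \<subseteq> ker (Dx x)"
  proof
    assume "set (take (Suc (3 - 1)) ys) \<subseteq> ker (Dx x)"
    with ys have "\<forall>s\<in>set ys. Dx x s = 0" by (simp add: coord_sys_def ker_def subset_iff)
    with ys have "Dx x varY = 0" by (intro Dx_vanishes_on_alg_gen) (auto simp: coord_sys_def)
    with assms show False by simp
  qed
qed simp

subsection \<open>Non-rigidity\<close>

lemma Dx_kernel_T_coordinate: "Dx x (varT - varY ^ 2 + 2 * cst3 x * varZ) = 0"
  by (simp add: Dx_diff Dx_add Dx_mult Dx_varY_square cst3_hom)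

lemma T_coordinate_notin_alg_gen_varT:
  fixes x :: "'a::idom"
  assumes "2 * x \<noteq> 0"
  shows "varT - varY ^ 2 + 2 * cst3 x * varZ \<notin> alg_gen cst3 {varT}"
proof
  assume "varT - varY ^ 2 + 2 * cst3 x * varZ \<in> alg_gen cst3 {varT}"
  then have "coeff (varT - varY ^ 2 + 2 * cst3 x * varZ) 1 = 0"
    by (intro coeff_eq_0) (simp add: degree_alg_gen_varT)
  with assms show False by (simp add: varT_def varY_def varZ_def cst3_def power2_eq_square numeral_poly)
qed

theorem mainTheorem3:
  shows "der_rank (cst3 :: ringA \<Rightarrow> ringB) 3 D_A = 2
    \<and> der_rank (cst3 :: rat poly fract \<Rightarrow> ringBK) 3 D_K = 1
    \<and> [varT, varY, varZ] \<in> Gamma_D (cst3 :: ringA \<Rightarrow> ringB) 3 D_A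
    \<and> [varT - varY ^ 2 + 2 * cst3 [:0, 1:] * varZ, varY, varZ] \<in> Gamma_D (cst3 :: ringA \<Rightarrow> ringB) 3 D_A
    \<and> alg_gen (cst3 :: ringA \<Rightarrow> ringB) {varT} \<noteq> alg_gen cst3 {varT - varY ^ 2 + 2 * cst3 [:0, 1:] * varZ}
    \<and> \<not> rigid (cst3 :: ringA \<Rightarrow> ringB) 3 D_A"
proof -
  let ?T' = "varT - varY ^ 2 + 2 * cst3 [:0, 1:] * varZ :: ringB"
  have rank_A: "der_rank (cst3 :: ringA \<Rightarrow> ringB) 3 D_A = 2"
    unfolding D_A_def by (rule der_rank_Dx_non_unit) (auto simp: is_unit_iff_degree)
  have "Fract [:0, 1:] 1 \<noteq> (0 :: rat poly fract)" by (simp add: Zero_fract_def eq_fract)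
  then have rank_K: "der_rank (cst3 :: rat poly fract \<Rightarrow> ringBK) 3 D_K = 1"
    unfolding D_K_def by (intro der_rank_Dx_field) simp
  have Gamma_T: "[varT, varY, varZ] \<in> Gamma_D (cst3 :: ringA \<Rightarrow> ringB) 3 D_A"
    unfolding Gamma_D_def rank_A
    by (simp add: coord_sys_def alg_gen_varT_varY_varZ ker_def D_A_def)
  have Gamma_T': "[?T', varY, varZ] \<in> Gamma_D cst3 3 D_A"
    unfolding Gamma_D_def rank_A
    by (simp add: coord_sys_def alg_gen_varT_Y_Z_triangular ker_def D_A_def Dx_kernel_T_coordinate)
  have "?T' \<notin> alg_gen cst3 {varT}" by (rule T_coordinate_notin_alg_gen_varT) simp
  then have distinct: "alg_gen (cst3 :: ringA \<Rightarrow> ringB) {varT} \<noteq> alg_gen cst3 {?T'}"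
    by (auto intro: alg_gen.gen)
  have "\<not> rigid (cst3 :: ringA \<Rightarrow> ringB) 3 D_A"
    unfolding rigid_def rank_A using Gamma_T Gamma_T' distinct by fastforce
  with rank_A rank_K Gamma_T Gamma_T' distinct show ?thesis by blast
qed

end
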